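(* Let $p\ge 4$ with $p\equiv 0$ or $\pm 2 \pmod 6$. Define exponents $g_{2,j},g_{3,j}\in\{1,-1\}$ for $1\le j\le p-1$ as follows: $g_{2,j}=-1$ exactly when $j\in\{p-2-6k : 0\le k\le \lfloor\tfrac{p+2}{6}\rfloor-1\}\cup\{p-3-6k: 0\le k\le\lfloor\tfrac{p-4}{6}\rfloor\}$, and $g_{2,j}=1$ otherwise; $g_{3,j}=-1$ exactly when $j\in\{p-3-6k : 0\le k\le \lfloor\tfrac{p+2}{6}\rfloor-1\}\cup\{p-4-6k: 0\le k\le\lfloor\tfrac{p-4}{6}\rfloor\}$, and $g_{3,j}=1$ otherwise (indices outside $\{1,\dots,p-1\}$ are ignored). Then the closure of the $p$-braid \[\sigma_1^{-1}\sigma_2^{-1}\cdots\sigma_{p-1}^{-1}\ \sigma_1^{g_{2,1}}\sigma_2^{g_{2,2}}\cdots\sigma_{p-1}^{g_{2,p-1}}\ \sigma_1^{g_{3,1}}\sigma_2^{g_{3,2}}\cdots\sigma_{p-1}^{g_{3,p-1}}\] is a trivial link.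
   Context: $\sigma_1,\dots,\sigma_{p-1}$ denote the standard Artin generators of the braid group $B_p$. A trivial link is a split union of unknots (an unlink). *)

theory Defs
  imports Main
begin

text \<open>Braid words: a letter i > 0 stands for sigma_i, a letter -i (i > 0) for sigma_i^{-1}.
  A word is a word in B_n if all letters have absolute value between 1 and n-1.\<close>

definition valid_letter :: "nat \<Rightarrow> int \<Rightarrow> bool" where
  "valid_letter n a \<longleftrightarrow> 1 \<le> \<bar>a\<bar> \<and> \<bar>a\<bar> \<le> int n - 1"

definition valid_word :: "nat \<Rightarrow> int list \<Rightarrow> bool" where
  "valid_word n w \<longleftrightarrow> (\<forall>a\<in>set w. valid_letter n a)"

inductive braid_rel :: "nat \<Rightarrow> int list \<Rightarrow> int list \<Rightarrow> bool" for n where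
  inv: "valid_letter n a \<Longrightarrow> braid_rel n [a, -a] []"
| comm: "valid_letter n (int i) \<Longrightarrow> valid_letter n (int j) \<Longrightarrow> \<bar>int i - int j\<bar> \<ge> 2
          \<Longrightarrow> braid_rel n [int i, int j] [int j, int i]"
| braid: "valid_letter n (int i) \<Longrightarrow> valid_letter n (int i + 1)
          \<Longrightarrow> braid_rel n [int i, int i + 1, int i] [int i + 1, int i, int i + 1]"

inductive braid_eq :: "nat \<Rightarrow> int list \<Rightarrow> int list \<Rightarrow> bool" for n where
  refl: "braid_eq n w w"
| step: "braid_rel n a b \<Longrightarrow> braid_eq n (u @ a @ v) (u @ b @ v)"
| sym: "braid_eq n w w' \<Longrightarrow> braid_eq n w' w"
| trans: "braid_eq n w w' \<Longrightarrow> braid_eq n w' w'' \<Longrightarrow> braid_eq n w w''"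

text \<open>By Markov's theorem, two braids are Markov equivalent
  iff their closures are isotopic links; we use this as the definition of the link type of
  a braid closure.\<close>
inductive markov_eq :: "nat \<times> int list \<Rightarrow> nat \<times> int list \<Rightarrow> bool" where
  group: "valid_word n w \<Longrightarrow> valid_word n w' \<Longrightarrow> braid_eq n w w'
          \<Longrightarrow> markov_eq (n, w) (n, w')"
| conj: "valid_word n (u @ v) \<Longrightarrow> markov_eq (n, u @ v) (n, v @ u)"
| stab_pos: "n \<ge> 1 \<Longrightarrow> valid_word n w \<Longrightarrow> markov_eq (n, w) (Suc n, w @ [int n])"
| stab_neg: "n \<ge> 1 \<Longrightarrow> valid_word n w \<Longrightarrow> markov_eq (n, w) (Suc n, w @ [- int n])"
| sym: "markov_eq x y \<Longrightarrow> markov_eq y x"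
| trans: "markov_eq x y \<Longrightarrow> markov_eq y z \<Longrightarrow> markov_eq x z"

text \<open>The closure of the n-braid w is a trivial link (unlink) iff it is Markov equivalent
  to the identity braid in some B_m (whose closure is the m-component unlink).\<close>
definition closure_trivial_link :: "nat \<Rightarrow> int list \<Rightarrow> bool" where
  "closure_trivial_link n w \<longleftrightarrow> (\<exists>m\<ge>1. markov_eq (n, w) (m, []))"

definition g2 :: "nat \<Rightarrow> nat \<Rightarrow> int" where
  "g2 p j = (if int j \<in> {int p - 2 - 6 * k | k. 0 \<le> k \<and> k \<le> (int p + 2) div 6 - 1}
                       \<union> {int p - 3 - 6 * k | k. 0 \<le> k \<and> k \<le> (int p - 4) div 6}
             then -1 else 1)"

definition g3 :: "nat \<Rightarrow> nat \<Rightarrow> int" where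
  "g3 p j = (if int j \<in> {int p - 3 - 6 * k | k. 0 \<le> k \<and> k \<le> (int p + 2) div 6 - 1}
                       \<union> {int p - 4 - 6 * k | k. 0 \<le> k \<and> k \<le> (int p - 4) div 6}
             then -1 else 1)"

end

theory Submission
  imports Defs
begin

(*
  Split the braid into three rows; in row i the letter on strand j carries the sign e_i (p - j),
  which depends only on the distance p - j to the top and is 6-periodic in it (e_1 = -1, while
  e_2 and e_3 are -1 exactly at distances 2, 3 and 3, 4 mod 6).  Each row ends with one letter on
  each of the top three strands.  Far commutations, mixed braid relations and conjugation gather
  these letters so that the top three strands can be removed by three destabilisations; what is
  left is the same kind of braid on p - 3 strands, with the distances shifted by 3.  For even p
  the shift alternates between 0 and 3 mod 6, so two explicit moves suffice, and the induction
  ends on one, two or three strands with a braid that is visibly Markov trivial.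
*)

declare braid_eq.trans [trans] markov_eq.trans [trans]

lemma valid_letter_uminus [simp]: "valid_letter n (- x) = valid_letter n x"
  by (simp add: valid_letter_def)

lemma valid_word_simps [simp]:
  "valid_word n []"
  "valid_word n (x # w) \<longleftrightarrow> valid_letter n x \<and> valid_word n w"
  "valid_word n (u @ w) \<longleftrightarrow> valid_word n u \<and> valid_word n w"
  by (auto simp: valid_word_def)

lemma valid_word_mono: "valid_word k w \<Longrightarrow> k \<le> m \<Longrightarrow> valid_word m w"
  by (auto simp: valid_word_def valid_letter_def)

lemma braid_eq_append_context: "braid_eq n w w' \<Longrightarrow> braid_eq n (u @ w @ v) (u @ w' @ v)"
proof (induction rule: braid_eq.induct)
  case (step a b u' v')
  then show ?case using braid_eq.step[of n a b "u @ u'" "v' @ v"] by simp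
qed (auto intro: braid_eq.intros)

lemma braid_eq_in_context:
  "braid_eq n w w' \<Longrightarrow> l = u @ w @ v \<Longrightarrow> r = u @ w' @ v \<Longrightarrow> braid_eq n l r"
  using braid_eq_append_context by blast

lemma braid_eq_cancel: "valid_letter n x \<Longrightarrow> braid_eq n [x, -x] []"
  using braid_eq.step[OF braid_rel.inv, of n x "[]" "[]"] by simp

lemma braid_eq_cancel_in_context:
  "valid_letter n x \<Longrightarrow> l = u @ [x, -x] @ v \<Longrightarrow> r = u @ v \<Longrightarrow> braid_eq n l r"
  using braid_eq_in_context[OF braid_eq_cancel] by fastforce

lemma braid_eq_commute_uminus:
  assumes "braid_eq n [x, y] [y, x]" "valid_letter n x"
  shows "braid_eq n [-x, y] [y, -x]"
proof -
  have "braid_eq n [-x, y] [-x, y, x, -x]"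
    by (rule braid_eq.sym, rule braid_eq_cancel_in_context[where u = "[-x, y]" and v = "[]"])
      (use assms in simp_all)
  also have "braid_eq n \<dots> [-x, x, y, -x]"
    by (rule braid_eq_in_context[OF braid_eq.sym[OF assms(1)], where u = "[-x]"]) simp_all
  also have "braid_eq n \<dots> [y, -x]"
    by (rule braid_eq_cancel_in_context[where x = "-x" and u = "[]"]) (use assms in simp_all)
  finally show ?thesis .
qed

lemma braid_eq_commute_far:
  assumes "valid_letter n x" "valid_letter n y" "2 \<le> \<bar>\<bar>x\<bar> - \<bar>y\<bar>\<bar>"
  shows "braid_eq n [x, y] [y, x]"
proof -
  have "z = int (nat \<bar>z\<bar>) \<or> z = - int (nat \<bar>z\<bar>)" for z :: int by linarith
  then obtain i j where x: "x = int i \<or> x = - int i" and y: "y = int j \<or> y = - int j" by blast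
  have valid: "valid_letter n (int i)" "valid_letter n (int j)" using assms x y by auto
  have "braid_eq n [int i, int j] [int j, int i]"
    using braid_eq.step[OF braid_rel.comm[OF valid], of "[]" "[]"] assms(3) x y by auto
  note pos = this braid_eq.sym[OF this]
  note mixed = braid_eq_commute_uminus[OF pos(1) valid(1)]
    braid_eq_commute_uminus[OF pos(2) valid(2)]
  note neg = braid_eq_commute_uminus[OF braid_eq.sym[OF mixed(1)] valid(2)]
  show ?thesis using x y pos mixed neg braid_eq.sym by auto
qed

lemma braid_eq_commute_past:
  assumes "valid_word m B" "int m + 1 \<le> \<bar>y\<bar>" "valid_letter n y"
  shows "braid_eq n (y # B) (B @ [y])"
  using assms(1)
proof (induction B)
  case Nil
  then show ?case by (simp add: braid_eq.refl)
next
  case (Cons z B)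
  have "valid_letter n z" "2 \<le> \<bar>\<bar>y\<bar> - \<bar>z\<bar>\<bar>"
    using Cons.prems assms(2,3) by (auto simp: valid_letter_def)
  then have "braid_eq n (y # z # B) (z # y # B)"
    using braid_eq_append_context[OF braid_eq_commute_far[of n y z], of "[]" B] assms(3) by simp
  also have "braid_eq n \<dots> (z # B @ [y])"
    using braid_eq_append_context[OF Cons.IH, of "[z]" "[]"] Cons.prems by simp
  finally show ?case by simp
qed

lemma braid_eq_commute_past_in_context:
  "valid_word m B \<Longrightarrow> int m + 1 \<le> \<bar>y\<bar> \<Longrightarrow> valid_letter n y
    \<Longrightarrow> l = u @ [y] @ B @ v \<Longrightarrow> r = u @ B @ [y] @ v \<Longrightarrow> braid_eq n l r"
  using braid_eq_in_context[OF braid_eq_commute_past] by fastforce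

lemma braid_eq_braid_relation:
  fixes x y :: int
  assumes "1 \<le> x" "1 \<le> y" "x \<le> int n - 1" "y \<le> int n - 1" "\<bar>x - y\<bar> = 1"
  shows "braid_eq n [x, y, x] [y, x, y]"
proof -
  have rel: "braid_eq n [int i, int i + 1, int i] [int i + 1, int i, int i + 1]"
    if "1 \<le> int i" "int i + 1 \<le> int n - 1" for i
    using braid_eq.step[OF braid_rel.braid, of n i "[]" "[]"] that by (simp add: valid_letter_def)
  show ?thesis
  proof (cases "y = x + 1")
    case True
    then show ?thesis using rel[of "nat x"] assms by simp
  next
    case False
    then have "x = y + 1" using assms(5) by auto
    then show ?thesis using braid_eq.sym[OF rel[of "nat y"]] assms by simp
  qed
qed

definition inverse_word :: "int list \<Rightarrow> int list" where
  "inverse_word w = rev (map uminus w)"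

lemma braid_eq_cancel_inverse: "valid_word n w \<Longrightarrow> braid_eq n (w @ inverse_word w) []"
proof (induction w)
  case Nil
  then show ?case by (simp add: inverse_word_def braid_eq.refl)
next
  case (Cons x w)
  have "braid_eq n ((x # w) @ inverse_word (x # w)) ([x] @ [] @ [-x])"
    using braid_eq_append_context[OF Cons.IH, of "[x]" "[-x]"] Cons.prems
    by (simp add: inverse_word_def)
  also have "braid_eq n \<dots> []" using braid_eq_cancel[of n x] Cons.prems by simp
  finally show ?case .
qed

lemma braid_eq_braid_relation_inverse:
  assumes "braid_eq n [x, y, x] [y, x, y]" "valid_letter n x" "valid_letter n y"
  shows "braid_eq n [-x, -y, -x] [-y, -x, -y]"
proof -
  have "braid_eq n [-x, -y, -x] ([-y, -x, -y] @ [y, x, y] @ [-x, -y, -x])"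
    using braid_eq_append_context[OF braid_eq.sym[OF braid_eq_cancel_inverse[of n "[-y, -x, -y]"]],
        of "[]" "[-x, -y, -x]"] assms(2,3)
    by (simp add: inverse_word_def)
  also have "braid_eq n \<dots> ([-y, -x, -y] @ [x, y, x] @ [-x, -y, -x])"
    using braid_eq_append_context[OF braid_eq.sym[OF assms(1)]] .
  also have "braid_eq n \<dots> [-y, -x, -y]"
    using braid_eq_append_context[OF braid_eq_cancel_inverse[of n "[x, y, x]"],
        of "[-y, -x, -y]" "[]"] assms(2,3)
    by (simp add: inverse_word_def)
  finally show ?thesis .
qed

lemma braid_eq_braid_relation_conj:
  assumes "braid_eq n [x, y, x] [y, x, y]" "valid_letter n x" "valid_letter n y"
  shows "braid_eq n [-x, y, x] [y, x, -y]" "braid_eq n [x, y, -x] [-y, x, y]"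
proof -
  have "braid_eq n [-x, y, x] [-x, y, x, y, -y]"
    by (rule braid_eq.sym, rule braid_eq_cancel_in_context[where u = "[-x, y, x]" and v = "[]"])
      (use assms in simp_all)
  also have "braid_eq n \<dots> [-x, x, y, x, -y]"
    by (rule braid_eq_in_context[OF braid_eq.sym[OF assms(1)], where u = "[-x]"]) simp_all
  also have "braid_eq n \<dots> [y, x, -y]"
    by (rule braid_eq_cancel_in_context[where x = "-x" and u = "[]"]) (use assms in simp_all)
  finally show "braid_eq n [-x, y, x] [y, x, -y]" .
  have "braid_eq n [x, y, -x] [-y, y, x, y, -x]"
    by (rule braid_eq.sym, rule braid_eq_cancel_in_context[where x = "-y" and u = "[]"])
      (use assms in simp_all)
  also have "braid_eq n \<dots> [-y, x, y, x, -x]"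
    by (rule braid_eq_in_context[OF braid_eq.sym[OF assms(1)], where u = "[-y]"]) simp_all
  also have "braid_eq n \<dots> [-y, x, y]"
    by (rule braid_eq_cancel_in_context[where x = x and u = "[-y, x, y]"]) (use assms in simp_all)
  finally show "braid_eq n [x, y, -x] [-y, x, y]" .
qed

lemma braid_eq_braid_relations_mixed:
  fixes x y :: int
  assumes "1 \<le> x" "1 \<le> y" "x \<le> int n - 1" "y \<le> int n - 1" "\<bar>x - y\<bar> = 1"
  shows "braid_eq n [-x, -y, x] [y, -x, -y]" "braid_eq n [x, -y, -x] [-y, -x, y]"
    "braid_eq n [-x, y, x] [y, x, -y]" "braid_eq n [x, y, -x] [-y, x, y]"
proof -
  have valid: "valid_letter n x" "valid_letter n y" using assms by (auto simp: valid_letter_def)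
  note pos = braid_eq_braid_relation[OF assms]
  show "braid_eq n [-x, y, x] [y, x, -y]" "braid_eq n [x, y, -x] [-y, x, y]"
    using braid_eq_braid_relation_conj[OF pos valid] by auto
  show "braid_eq n [-x, -y, x] [y, -x, -y]" "braid_eq n [x, -y, -x] [-y, -x, y]"
    using braid_eq_braid_relation_conj[OF braid_eq_braid_relation_inverse[OF pos valid]] valid
    by auto
qed

lemma markov_eq_of_braid_eq:
  "braid_eq n w w' \<Longrightarrow> valid_word n w \<Longrightarrow> valid_word n w' \<Longrightarrow> markov_eq (n, w) (n, w')"
  by (rule markov_eq.group)

lemma markov_eq_rotate:
  "w = u @ v \<Longrightarrow> w' = v @ u \<Longrightarrow> valid_word n w \<Longrightarrow> markov_eq (n, w) (n, w')"
  using markov_eq.conj by blast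

lemma markov_eq_conj_letter:
  assumes "valid_letter n x" "valid_word n w" "l = [x] @ w @ [-x]"
  shows "markov_eq (n, l) (n, w)"
proof -
  have "markov_eq (n, l) (n, w @ [-x, x])"
    by (rule markov_eq_rotate[where u = "[x]"]) (use assms in simp_all)
  also have "markov_eq \<dots> (n, w)"
    by (rule markov_eq_of_braid_eq,
        rule braid_eq_cancel_in_context[where x = "-x" and u = w and v = "[]"])
      (use assms in simp_all)
  finally show ?thesis .
qed

lemma markov_eq_destab:
  assumes "1 \<le> k" "valid_word k u" "valid_word k v" "\<bar>x\<bar> = int k"
    and "n = k + 1" "l = u @ [x] @ v" "r = v @ u"
  shows "markov_eq (n, l) (k, r)"
proof -
  have "markov_eq (n, l) (n, v @ u @ [x])"
    by (rule markov_eq_rotate[where u = "u @ [x]"])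
      (use assms valid_word_mono[of k] in \<open>auto simp: valid_letter_def\<close>)
  also have "markov_eq \<dots> (k, r)"
  proof -
    have "x = int k \<or> x = - int k" using assms(4) by linarith
    then show ?thesis
      using markov_eq.stab_pos[of k "v @ u"] markov_eq.stab_neg[of k "v @ u"] assms
      by (auto intro: markov_eq.sym)
  qed
  finally show ?thesis .
qed

lemma closure_trivial_link_markov_eq:
  "markov_eq (n, w) (m, w') \<Longrightarrow> closure_trivial_link m w' \<Longrightarrow> closure_trivial_link n w"
  unfolding closure_trivial_link_def by (blast intro: markov_eq.trans)

section \<open>Removing the top three strands\<close>

text \<open>B1, B2, B3 are three rows on the first k strands.  Each word below extends every row by
  its letters on strands k, k + 1, k + 2, written c, b, a; patterns A and B are the two sign
  patterns of these letters that occur (for the shifts 0 and 3 mod 6).\<close>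

locale strand_reduction =
  fixes k :: nat and B1 B2 B3 :: "int list"
  assumes k_pos: "1 \<le> k"
    and valid_blocks: "valid_word k B1" "valid_word k B2" "valid_word k B3"
begin

abbreviation (input) c :: int where "c \<equiv> int k"
abbreviation (input) b :: int where "b \<equiv> int k + 1"
abbreviation (input) a :: int where "a \<equiv> int k + 2"

lemma valid_blocks_mono [simp]:
  "k \<le> m \<Longrightarrow> valid_word m B1" "k \<le> m \<Longrightarrow> valid_word m B2" "k \<le> m \<Longrightarrow> valid_word m B3"
  using valid_blocks valid_word_mono by blast+

lemma valid_top_letters [simp]:
  "k < m \<Longrightarrow> valid_letter m c"
  "k + 1 < m \<Longrightarrow> valid_letter m b" "k + 1 < m \<Longrightarrow> valid_letter m (- int k - 1)"
  "k + 2 < m \<Longrightarrow> valid_letter m a" "k + 2 < m \<Longrightarrow> valid_letter m (- int k - 2)"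
  using k_pos by (auto simp: valid_letter_def)

lemma pattern_A_destab_top:
  "markov_eq (k + 3, B1 @ [-c, -b, -a] @ B2 @ [-c, -b, a] @ B3 @ [-c, b, a])
             (k + 2, [b, -c, -b] @ B3 @ [-c, b] @ B1 @ [-c] @ B2 @ [c, -b])"
proof -
  have rel: "braid_eq (k + 3) [-a, -b, a] [b, -a, -b]" "braid_eq (k + 3) [a, -b, -a] [-b, -a, b]"
    "braid_eq (k + 3) [-b, -c, b] [c, -b, -c]"
    using braid_eq_braid_relations_mixed[of a b "k + 3"]
      braid_eq_braid_relations_mixed[of b c "k + 3"] k_pos by auto
  have comm: "braid_eq (k + 3) [a, c] [c, a]" "braid_eq (k + 3) [-c, -a] [-a, -c]"
    using braid_eq_commute_far[of "k + 3" a c] braid_eq_commute_far[of "k + 3" "-c" "-a"] by auto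
  have "braid_eq (k + 3) (B1 @ [-c, -b, -a] @ B2 @ [-c, -b, a] @ B3 @ [-c, b, a])
                         (B1 @ [-c, -b] @ B2 @ [-c] @ [-a, -b, a] @ B3 @ [-c, b, a])"
    by (rule braid_eq_commute_past_in_context[where m = "k + 1" and y = "-a" and B = "B2 @ [-c]"
          and u = "B1 @ [-c, -b]"]) simp_all
  also have "braid_eq (k + 3) \<dots> (B1 @ [-c, -b] @ B2 @ [-c] @ [b, -a, -b] @ B3 @ [-c, b, a])"
    by (rule braid_eq_in_context[OF rel(1), where u = "B1 @ [-c, -b] @ B2 @ [-c]"]) simp_all
  finally have "markov_eq (k + 3, B1 @ [-c, -b, -a] @ B2 @ [-c, -b, a] @ B3 @ [-c, b, a])
                  (k + 3, B1 @ [-c, -b] @ B2 @ [-c] @ [b, -a, -b] @ B3 @ [-c, b, a])"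
    by (rule markov_eq_of_braid_eq) simp_all
  also have "markov_eq \<dots> (k + 3, [b, a] @ B1 @ [-c, -b] @ B2 @ [-c] @ [b, -a, -b] @ B3 @ [-c])"
    by (rule markov_eq_rotate[where v = "[b, a]"]) simp_all
  also have "markov_eq \<dots> (k + 3, [b] @ B1 @ [-c] @ B2 @ [c, -b, -a, b, -c, -b] @ B3 @ [-c])"
  proof (rule markov_eq_of_braid_eq)
    have "braid_eq (k + 3) ([b, a] @ B1 @ [-c, -b] @ B2 @ [-c] @ [b, -a, -b] @ B3 @ [-c])
                           ([b] @ B1 @ [-c] @ [a] @ [-b] @ B2 @ [-c] @ [b, -a, -b] @ B3 @ [-c])"
      by (rule braid_eq_commute_past_in_context[where m = "k + 1" and y = a and B = "B1 @ [-c]"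
            and u = "[b]"]) simp_all
    also have "braid_eq (k + 3) \<dots> ([b] @ B1 @ [-c, a] @ B2 @ [-b] @ [-c] @ [b, -a, -b] @ B3 @ [-c])"
      by (rule braid_eq_commute_past_in_context[where m = k and y = "-b" and B = B2
            and u = "[b] @ B1 @ [-c, a]"]) simp_all
    also have "braid_eq (k + 3) \<dots> ([b] @ B1 @ [-c] @ B2 @ [a] @ [-b, -c, b] @ [-a, -b] @ B3 @ [-c])"
      by (rule braid_eq_commute_past_in_context[where m = k and y = a and B = B2
            and u = "[b] @ B1 @ [-c]"]) simp_all
    also have "braid_eq (k + 3) \<dots> ([b] @ B1 @ [-c] @ B2 @ [a] @ [c, -b, -c] @ [-a, -b] @ B3 @ [-c])"
      by (rule braid_eq_in_context[OF rel(3), where u = "[b] @ B1 @ [-c] @ B2 @ [a]"]) simp_all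
    also have "braid_eq (k + 3) \<dots>
        ([b] @ B1 @ [-c] @ B2 @ [c, a] @ [-b] @ [-c, -a] @ [-b] @ B3 @ [-c])"
      by (rule braid_eq_in_context[OF comm(1), where u = "[b] @ B1 @ [-c] @ B2"]) simp_all
    also have "braid_eq (k + 3) \<dots> ([b] @ B1 @ [-c] @ B2 @ [c] @ [a, -b, -a] @ [-c, -b] @ B3 @ [-c])"
      by (rule braid_eq_in_context[OF comm(2), where u = "[b] @ B1 @ [-c] @ B2 @ [c, a, -b]"])
        simp_all
    also have "braid_eq (k + 3) \<dots> ([b] @ B1 @ [-c] @ B2 @ [c, -b, -a, b, -c, -b] @ B3 @ [-c])"
      by (rule braid_eq_in_context[OF rel(2), where u = "[b] @ B1 @ [-c] @ B2 @ [c]"]) simp_all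
    finally show "braid_eq (k + 3) ([b, a] @ B1 @ [-c, -b] @ B2 @ [-c] @ [b, -a, -b] @ B3 @ [-c])
                  ([b] @ B1 @ [-c] @ B2 @ [c, -b, -a, b, -c, -b] @ B3 @ [-c])" .
  qed simp_all
  also have "markov_eq \<dots> (k + 2, [b, -c, -b] @ B3 @ [-c, b] @ B1 @ [-c] @ B2 @ [c, -b])"
    by (rule markov_eq_destab[where x = "-a" and u = "[b] @ B1 @ [-c] @ B2 @ [c, -b]"
          and v = "[b, -c, -b] @ B3 @ [-c]"]) simp_all
  finally show ?thesis .
qed

lemma pattern_A_destab_second:
  "markov_eq (k + 2, [b, -c, -b] @ B3 @ [-c, b] @ B1 @ [-c] @ B2 @ [c, -b])
             (k + 1, [c] @ B2 @ B3 @ [-c] @ B1 @ [-c])"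
proof -
  have rel: "braid_eq (k + 2) [b, -c, -b] [-c, -b, c]"
    using braid_eq_braid_relations_mixed(2)[of b c "k + 2"] k_pos by simp
  have "markov_eq (k + 2, [b, -c, -b] @ B3 @ [-c, b] @ B1 @ [-c] @ B2 @ [c, -b])
                  (k + 2, [b] @ B1 @ [-c] @ B2 @ [c, -b, b, -c, -b] @ B3 @ [-c])"
    by (rule markov_eq_rotate[where u = "[b, -c, -b] @ B3 @ [-c]"]) simp_all
  also have "markov_eq \<dots> (k + 2, B1 @ [-c, -b, c] @ B2 @ B3 @ [-c])"
  proof (rule markov_eq_of_braid_eq)
    have "braid_eq (k + 2) ([b] @ B1 @ [-c] @ B2 @ [c, -b, b, -c, -b] @ B3 @ [-c])
                           ([b] @ B1 @ [-c] @ B2 @ [c, -c, -b] @ B3 @ [-c])"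
      by (rule braid_eq_cancel_in_context[where x = "-b" and u = "[b] @ B1 @ [-c] @ B2 @ [c]"])
        simp_all
    also have "braid_eq (k + 2) \<dots> ([b] @ B1 @ [-c] @ B2 @ [-b] @ B3 @ [-c])"
      by (rule braid_eq_cancel_in_context[where x = c and u = "[b] @ B1 @ [-c] @ B2"]) simp_all
    also have "braid_eq (k + 2) \<dots> (B1 @ [b, -c] @ B2 @ [-b] @ B3 @ [-c])"
      by (rule braid_eq_commute_past_in_context[where m = k and y = b and B = B1 and u = "[]"])
        simp_all
    also have "braid_eq (k + 2) \<dots> (B1 @ [b, -c] @ [-b] @ B2 @ B3 @ [-c])"
      by (rule braid_eq.sym, rule braid_eq_commute_past_in_context[where m = k and y = "-b"
            and B = B2 and u = "B1 @ [b, -c]"]) simp_all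
    also have "braid_eq (k + 2) \<dots> (B1 @ [-c, -b, c] @ B2 @ B3 @ [-c])"
      by (rule braid_eq_in_context[OF rel, where u = B1]) simp_all
    finally show "braid_eq (k + 2) ([b] @ B1 @ [-c] @ B2 @ [c, -b, b, -c, -b] @ B3 @ [-c])
                  (B1 @ [-c, -b, c] @ B2 @ B3 @ [-c])" .
  qed simp_all
  also have "markov_eq \<dots> (k + 1, [c] @ B2 @ B3 @ [-c] @ B1 @ [-c])"
    by (rule markov_eq_destab[where x = "-b" and u = "B1 @ [-c]" and v = "[c] @ B2 @ B3 @ [-c]"])
      simp_all
  finally show ?thesis .
qed

lemma pattern_A:
  "markov_eq (k + 3, B1 @ [-c, -b, -a] @ B2 @ [-c, -b, a] @ B3 @ [-c, b, a]) (k, B1 @ B2 @ B3)"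
proof -
  note pattern_A_destab_top
  also note pattern_A_destab_second
  also have "markov_eq (k + 1, [c] @ B2 @ B3 @ [-c] @ B1 @ [-c]) (k + 1, B2 @ B3 @ [-c] @ B1)"
    by (rule markov_eq_conj_letter) simp_all
  also have "markov_eq \<dots> (k, B1 @ B2 @ B3)"
    by (rule markov_eq_destab[where x = "-c" and u = "B2 @ B3" and v = B1]) (use k_pos in simp_all)
  finally show ?thesis .
qed

lemma pattern_B_destab_top:
  "markov_eq (k + 3, B1 @ [-c, -b, -a] @ B2 @ [c, b, a] @ B3 @ [c, b, -a])
             (k + 2, [b, -c] @ B1 @ [-c, -b] @ B2 @ [c, b] @ B3 @ [c, -b])"
proof -
  have rel: "braid_eq (k + 3) [-a, b, a] [b, a, -b]" "braid_eq (k + 3) [a, b, -a] [-b, a, b]"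
    "braid_eq (k + 3) [-b, c, b] [c, b, -c]"
    using braid_eq_braid_relations_mixed[of a b "k + 3"]
      braid_eq_braid_relations_mixed[of b c "k + 3"] k_pos by auto
  have comm: "braid_eq (k + 3) [a, c] [c, a]" "braid_eq (k + 3) [-c, -a] [-a, -c]"
    using braid_eq_commute_far[of "k + 3" a c] braid_eq_commute_far[of "k + 3" "-c" "-a"] by auto
  have "braid_eq (k + 3) (B1 @ [-c, -b, -a] @ B2 @ [c, b, a] @ B3 @ [c, b, -a])
                         (B1 @ [-c, -b] @ B2 @ [c] @ [-a, b, a] @ B3 @ [c, b, -a])"
    by (rule braid_eq_commute_past_in_context[where m = "k + 1" and y = "-a" and B = "B2 @ [c]"
          and u = "B1 @ [-c, -b]"]) simp_all
  also have "braid_eq (k + 3) \<dots> (B1 @ [-c, -b] @ B2 @ [c, b, a] @ [-b] @ B3 @ [c, b, -a])"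
    by (rule braid_eq_in_context[OF rel(1), where u = "B1 @ [-c, -b] @ B2 @ [c]"]) simp_all
  also have "braid_eq (k + 3) \<dots> (B1 @ [-c, -b] @ B2 @ [c, b, a] @ B3 @ [-b, c, b, -a])"
    by (rule braid_eq_commute_past_in_context[where m = k and y = "-b" and B = B3
          and u = "B1 @ [-c, -b] @ B2 @ [c, b, a]"]) simp_all
  also have "braid_eq (k + 3) \<dots> (B1 @ [-c, -b] @ B2 @ [c, b] @ B3 @ [a] @ [-b, c, b] @ [-a])"
    by (rule braid_eq_commute_past_in_context[where m = k and y = a and B = B3
          and u = "B1 @ [-c, -b] @ B2 @ [c, b]"]) simp_all
  also have "braid_eq (k + 3) \<dots> (B1 @ [-c, -b] @ B2 @ [c, b] @ B3 @ [a, c] @ [b] @ [-c, -a])"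
    by (rule braid_eq_in_context[OF rel(3), where u = "B1 @ [-c, -b] @ B2 @ [c, b] @ B3 @ [a]"])
      simp_all
  also have "braid_eq (k + 3) \<dots> (B1 @ [-c, -b] @ B2 @ [c, b] @ B3 @ [a, c] @ [b] @ [-a, -c])"
    by (rule braid_eq_in_context[OF comm(2),
          where u = "B1 @ [-c, -b] @ B2 @ [c, b] @ B3 @ [a, c, b]"]) simp_all
  also have "braid_eq (k + 3) \<dots> (B1 @ [-c, -b] @ B2 @ [c, b] @ B3 @ [c] @ [a, b, -a] @ [-c])"
    by (rule braid_eq_in_context[OF comm(1), where u = "B1 @ [-c, -b] @ B2 @ [c, b] @ B3"]) simp_all
  also have "braid_eq (k + 3) \<dots> (B1 @ [-c, -b] @ B2 @ [c, b] @ B3 @ [c, -b, a, b, -c])"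
    by (rule braid_eq_in_context[OF rel(2), where u = "B1 @ [-c, -b] @ B2 @ [c, b] @ B3 @ [c]"])
      simp_all
  finally have "markov_eq (k + 3, B1 @ [-c, -b, -a] @ B2 @ [c, b, a] @ B3 @ [c, b, -a])
                  (k + 3, B1 @ [-c, -b] @ B2 @ [c, b] @ B3 @ [c, -b, a, b, -c])"
    by (rule markov_eq_of_braid_eq) simp_all
  also have "markov_eq \<dots> (k + 2, [b, -c] @ B1 @ [-c, -b] @ B2 @ [c, b] @ B3 @ [c, -b])"
    by (rule markov_eq_destab[where x = a and u = "B1 @ [-c, -b] @ B2 @ [c, b] @ B3 @ [c, -b]"
          and v = "[b, -c]"]) simp_all
  finally show ?thesis .
qed

lemma pattern_B_destab_second:
  "markov_eq (k + 2, [b, -c] @ B1 @ [-c, -b] @ B2 @ [c, b] @ B3 @ [c, -b])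
             (k + 1, [-c] @ B3 @ B1 @ [-c] @ B2 @ [c])"
proof -
  have rel: "braid_eq (k + 2) [-b, c, b] [c, b, -c]"
    using braid_eq_braid_relations_mixed(3)[of b c "k + 2"] k_pos by simp
  have "markov_eq (k + 2, [b, -c] @ B1 @ [-c, -b] @ B2 @ [c, b] @ B3 @ [c, -b])
                  (k + 2, B1 @ [-c, -b] @ B2 @ [c, b] @ B3 @ [c, -b, b, -c])"
    by (rule markov_eq_rotate[where u = "[b, -c]"]) simp_all
  also have "markov_eq \<dots> (k + 2, B1 @ [-c] @ B2 @ [c, b, -c] @ B3)"
  proof (rule markov_eq_of_braid_eq)
    have "braid_eq (k + 2) (B1 @ [-c, -b] @ B2 @ [c, b] @ B3 @ [c, -b, b, -c])
                           (B1 @ [-c, -b] @ B2 @ [c, b] @ B3 @ [c, -c])"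
      by (rule braid_eq_cancel_in_context[where x = "-b"
            and u = "B1 @ [-c, -b] @ B2 @ [c, b] @ B3 @ [c]"]) simp_all
    also have "braid_eq (k + 2) \<dots> (B1 @ [-c, -b] @ B2 @ [c, b] @ B3)"
      by (rule braid_eq_cancel_in_context[where x = c and u = "B1 @ [-c, -b] @ B2 @ [c, b] @ B3"])
        simp_all
    also have "braid_eq (k + 2) \<dots> (B1 @ [-c] @ B2 @ [-b, c, b] @ B3)"
      by (rule braid_eq_commute_past_in_context[where m = k and y = "-b" and B = B2
            and u = "B1 @ [-c]"]) simp_all
    also have "braid_eq (k + 2) \<dots> (B1 @ [-c] @ B2 @ [c, b, -c] @ B3)"
      by (rule braid_eq_in_context[OF rel, where u = "B1 @ [-c] @ B2"]) simp_all
    finally show "braid_eq (k + 2) (B1 @ [-c, -b] @ B2 @ [c, b] @ B3 @ [c, -b, b, -c])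
                  (B1 @ [-c] @ B2 @ [c, b, -c] @ B3)" .
  qed simp_all
  also have "markov_eq \<dots> (k + 1, [-c] @ B3 @ B1 @ [-c] @ B2 @ [c])"
    by (rule markov_eq_destab[where x = b and u = "B1 @ [-c] @ B2 @ [c]" and v = "[-c] @ B3"])
      simp_all
  finally show ?thesis .
qed

lemma pattern_B:
  "markov_eq (k + 3, B1 @ [-c, -b, -a] @ B2 @ [c, b, a] @ B3 @ [c, b, -a]) (k, B1 @ B2 @ B3)"
proof -
  note pattern_B_destab_top
  also note pattern_B_destab_second
  also have "markov_eq (k + 1, [-c] @ B3 @ B1 @ [-c] @ B2 @ [c]) (k + 1, B3 @ B1 @ [-c] @ B2)"
    by (rule markov_eq_conj_letter[where x = "-c"]) simp_all
  also have "markov_eq \<dots> (k, B2 @ B3 @ B1)"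
    by (rule markov_eq_destab[where x = "-c" and u = "B3 @ B1" and v = B2]) (use k_pos in simp_all)
  also have "markov_eq \<dots> (k, B1 @ B2 @ B3)"
    by (rule markov_eq_rotate[where u = "B2 @ B3"]) simp_all
  finally show ?thesis .
qed

end

section \<open>Rows with periodic signs\<close>

text \<open>The sign of the letter on strand j depends on its distance n - j to the top, shifted by s:
  removing the top three strands of a row on n strands with shift s leaves the row on n - 3
  strands with shift s + 3.\<close>

definition signed_row :: "(nat \<Rightarrow> int) \<Rightarrow> nat \<Rightarrow> nat \<Rightarrow> int list" where
  "signed_row e n s = map (\<lambda>j. e (n - j + s) * int j) [1..<n]"

definition eps2 :: "nat \<Rightarrow> int" where
  "eps2 m = (if m mod 6 \<in> {2, 3} then -1 else 1)"

definition eps3 :: "nat \<Rightarrow> int" where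
  "eps3 m = (if m mod 6 \<in> {3, 4} then -1 else 1)"

definition three_rows :: "nat \<Rightarrow> nat \<Rightarrow> int list" where
  "three_rows n s = signed_row (\<lambda>_. -1) n s @ signed_row eps2 n s @ signed_row eps3 n s"

lemma signed_row_add3:
  assumes "1 \<le> k"
  shows "signed_row e (k + 3) s
           = signed_row e k (s + 3)
             @ [e (s + 3) * int k, e (s + 2) * (int k + 1), e (s + 1) * (int k + 2)]"
proof -
  have "[1..<k + 3] = [1..<k] @ [k, k + 1, k + 2]"
    using assms upt_add_eq_append[of 1 k 3] by (simp add: upt_rec)
  moreover have "map (\<lambda>j. e (k + 3 - j + s) * int j) [1..<k] = signed_row e k (s + 3)"
    unfolding signed_row_def by (rule map_cong) (auto simp: algebra_simps)
  ultimately show ?thesis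
    unfolding signed_row_def by (simp add: algebra_simps)
qed

lemma valid_signed_row:
  assumes "\<And>m. e m \<in> {-1, 1}"
  shows "valid_word n (signed_row e n s)"
proof -
  have "\<bar>e m * int j\<bar> = int j" for m j using assms[of m] by (auto simp: abs_mult)
  then show ?thesis by (auto simp: signed_row_def valid_word_def valid_letter_def)
qed

lemma three_rows_reduce:
  assumes "1 \<le> k" "3 dvd s"
  shows "markov_eq (k + 3, three_rows (k + 3) s) (k, three_rows k (s + 3))"
proof -
  interpret strand_reduction k "signed_row (\<lambda>_. -1) k (s + 3)" "signed_row eps2 k (s + 3)"
      "signed_row eps3 k (s + 3)"
    by unfold_locales (use assms(1) in \<open>auto intro!: valid_signed_row simp: eps2_def eps3_def\<close>)
  have rows: "three_rows (k + 3) s = signed_row (\<lambda>_. -1) k (s + 3) @ [-c, -b, -a]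
      @ signed_row eps2 k (s + 3) @ [eps2 (s + 3) * c, eps2 (s + 2) * b, eps2 (s + 1) * a]
      @ signed_row eps3 k (s + 3) @ [eps3 (s + 3) * c, eps3 (s + 2) * b, eps3 (s + 1) * a]"
    unfolding three_rows_def signed_row_add3[OF assms(1)] by simp
  have "s mod 6 = 0 \<or> s mod 6 = 3" using assms(2) by presburger
  then show ?thesis
  proof
    assume "s mod 6 = 0"
    then have "(s + 3) mod 6 = 3" "(s + 2) mod 6 = 2" "(s + 1) mod 6 = 1" by presburger+
    then show ?thesis
      using pattern_A unfolding rows by (simp add: three_rows_def eps2_def eps3_def)
  next
    assume "s mod 6 = 3"
    then have "(s + 3) mod 6 = 0" "(s + 2) mod 6 = 5" "(s + 1) mod 6 = 4" by presburger+
    then show ?thesis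
      using pattern_B unfolding rows by (simp add: three_rows_def eps2_def eps3_def)
  qed
qed

lemma closure_trivial_link_empty: "1 \<le> n \<Longrightarrow> closure_trivial_link n []"
  unfolding closure_trivial_link_def using markov_eq.group[OF _ _ braid_eq.refl, of n "[]"] by auto

lemma closure_trivial_link_two_strands: "closure_trivial_link 2 [-1, 1, 1]"
proof -
  have "markov_eq (2, [-1, 1, 1]) (2, [1])"
    by (rule markov_eq_of_braid_eq, rule braid_eq_cancel_in_context[where x = "-1" and u = "[]"])
      (simp_all add: valid_letter_def)
  also have "markov_eq \<dots> (1, [])"
    by (rule markov_eq_destab[where x = 1 and u = "[]" and v = "[]"]) simp_all
  finally show ?thesis using closure_trivial_link_empty[of 1] closure_trivial_link_markov_eq by simp
qed

lemma closure_trivial_link_three_strands: "closure_trivial_link 3 [-1, -2, 1, 2, 1, -2]"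
proof -
  have "braid_eq 3 [-1, -2, 1, 2, 1, -2] [-1, -2, 1, -1, 2, 1]"
    using braid_eq_in_context[OF braid_eq_braid_relations_mixed(4)[of 2 1 3],
        where u = "[-1, -2, 1]"] by simp
  also have "braid_eq 3 \<dots> [-1, -2, 2, 1]"
    by (rule braid_eq_cancel_in_context[where x = 1 and u = "[-1, -2]"])
      (simp_all add: valid_letter_def)
  also have "braid_eq 3 \<dots> [-1, 1]"
    by (rule braid_eq_cancel_in_context[where x = "-2" and u = "[-1]"])
      (simp_all add: valid_letter_def)
  also have "braid_eq 3 \<dots> []"
    by (rule braid_eq_cancel_in_context[where x = "-1" and u = "[]"])
      (simp_all add: valid_letter_def)
  finally have "markov_eq (3, [-1, -2, 1, 2, 1, -2]) (3, [])"
    by (rule markov_eq_of_braid_eq) (simp_all add: valid_letter_def)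
  then show ?thesis using closure_trivial_link_empty[of 3] closure_trivial_link_markov_eq by simp
qed

lemma three_rows_two_strands: "6 dvd s \<Longrightarrow> three_rows 2 s = [-1, 1, 1]"
  by (simp add: three_rows_def signed_row_def upt_rec eps2_def eps3_def mod_Suc dvd_eq_mod_eq_0)

lemma three_rows_three_strands: "s mod 6 = 3 \<Longrightarrow> three_rows 3 s = [-1, -2, 1, 2, 1, -2]"
  by (simp add: three_rows_def signed_row_def upt_rec eps2_def eps3_def mod_Suc)

text \<open>The invariant says that s is 0 mod 6 for even n and 3 mod 6 for odd n.\<close>

lemma three_rows_closure_trivial:
  assumes "1 \<le> n" "6 dvd s + 3 * n"
  shows "closure_trivial_link n (three_rows n s)"
  using assms
proof (induction n arbitrary: s rule: less_induct)
  case (less n)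
  have "n = 1 \<or> n = 2 \<or> n = 3 \<or> n = (n - 3) + 3 \<and> 1 \<le> n - 3" using less.prems(1) by linarith
  then consider "n = 1" | "n = 2" | "n = 3" | k where "n = k + 3" "1 \<le> k" by blast
  then show ?case
  proof cases
    case 1
    then show ?thesis by (simp add: three_rows_def signed_row_def closure_trivial_link_empty)
  next
    case 2
    then have "6 dvd s" using less.prems(2) by (simp add: dvd_add_left_iff)
    then show ?thesis using 2 closure_trivial_link_two_strands three_rows_two_strands by simp
  next
    case 3
    then have "s mod 6 = 3" using less.prems(2) by presburger
    then show ?thesis using 3 closure_trivial_link_three_strands three_rows_three_strands by simp
  next
    case 4
    have "s + 3 * n = (s + 3 + 3 * k) + 6" using 4(1) by simp
    then have "6 dvd (s + 3 + 3 * k) + 6" using less.prems(2) by (simp only:)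
    then have "6 dvd s + 3 + 3 * k" by (simp only: dvd_add_left_iff[OF dvd_refl])
    moreover have "3 dvd s"
      using dvd_trans[of 3 6 "s + 3 * n"] less.prems(2) dvd_add_left_iff[of 3 "3 * n" s] by simp
    ultimately show ?thesis
      using closure_trivial_link_markov_eq[OF three_rows_reduce] less.IH[of k "s + 3"] 4 by auto
  qed
qed

section \<open>The exponents g2 and g3\<close>

lemma mem_progression_iff:
  fixes d r Y :: int
  assumes "0 \<le> r" "r < 6"
  shows "(\<exists>k. d = r + 6 * k \<and> 0 \<le> k \<and> k \<le> Y div 6) \<longleftrightarrow> d mod 6 = r \<and> r \<le> d \<and> d - r \<le> Y"
proof
  assume "\<exists>k. d = r + 6 * k \<and> 0 \<le> k \<and> k \<le> Y div 6"
  then obtain k where "d = r + 6 * k" "0 \<le> k" "6 * k \<le> 6 * (Y div 6)" by auto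
  moreover have "6 * (Y div 6) \<le> Y" using div_mult_mod_eq[of Y 6] pos_mod_sign[of 6 Y] by linarith
  ultimately show "d mod 6 = r \<and> r \<le> d \<and> d - r \<le> Y" using assms by auto
next
  assume d: "d mod 6 = r \<and> r \<le> d \<and> d - r \<le> Y"
  have "d = r + 6 * (d div 6)" using d div_mult_mod_eq[of d 6] by linarith
  moreover from this have "d div 6 \<le> Y div 6" using d zdiv_mono1[of "6 * (d div 6)" Y 6] by simp
  ultimately show "\<exists>k. d = r + 6 * k \<and> 0 \<le> k \<and> k \<le> Y div 6"
    using d assms by (intro exI[of _ "d div 6"]) auto
qed

lemma g2_eq_eps2:
  assumes "even p" "1 \<le> j" "j < p"
  shows "g2 p j = eps2 (p - j)"
proof -
  define d where "d = int p - int j"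
  have j: "int j = int p - d" unfolding d_def by simp
  have shift: "\<And>r k. (int p - d = int p - r - 6 * k) = (d = r + 6 * k)" by linarith
  have d_mod: "int ((p - j) mod 6) = d mod 6"
    using assms by (simp add: d_def of_nat_mod of_nat_diff)
  \<comment> \<open>The only use of the parity of p: the residue-2 progression in g2 stops at p - 2.\<close>
  have "d mod 6 = 2 \<Longrightarrow> d \<le> int p - 2"
    using assms unfolding d_def by presburger
  moreover have "(int p + 2) div 6 - 1 = (int p - 4) div 6" by simp
  ultimately show ?thesis
    using assms d_mod unfolding g2_def eps2_def j Un_iff mem_Collect_eq shift
    by (auto simp: mem_progression_iff d_def)
qed

lemma g3_eq_eps3:
  assumes "1 \<le> j" "j < p"
  shows "g3 p j = eps3 (p - j)"
proof -
  define d where "d = int p - int j"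
  have j: "int j = int p - d" unfolding d_def by simp
  have shift: "\<And>r k. (int p - d = int p - r - 6 * k) = (d = r + 6 * k)" by linarith
  have d_mod: "int ((p - j) mod 6) = d mod 6"
    using assms by (simp add: d_def of_nat_mod of_nat_diff)
  have "(int p + 2) div 6 - 1 = (int p - 4) div 6" by simp
  then show ?thesis
    using assms d_mod unfolding g3_def eps3_def j Un_iff mem_Collect_eq shift
    by (auto simp: mem_progression_iff d_def)
qed

theorem lemma3p4:
  fixes p :: nat
  assumes "p \<ge> 4"
    and "p mod 6 = 0 \<or> p mod 6 = 2 \<or> p mod 6 = 4"
  shows "closure_trivial_link p
           (map (\<lambda>j. - int j) [1..<p]
            @ map (\<lambda>j. g2 p j * int j) [1..<p]
            @ map (\<lambda>j. g3 p j * int j) [1..<p])"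
proof -
  have "even p" using assms(2) by presburger
  then have "6 dvd 0 + 3 * p" by (auto elim: evenE)
  then have "closure_trivial_link p (three_rows p 0)"
    using assms(1) by (intro three_rows_closure_trivial) auto
  moreover have "three_rows p 0 = map (\<lambda>j. - int j) [1..<p]
      @ map (\<lambda>j. g2 p j * int j) [1..<p] @ map (\<lambda>j. g3 p j * int j) [1..<p]"
    using g2_eq_eps2[OF \<open>even p\<close>] g3_eq_eps3 by (simp add: three_rows_def signed_row_def)
  ultimately show ?thesis by simp
qed

end
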